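(* Let $q\equiv 3\pmod 4$ be a prime power with $q\geq 7$, let $n\geq 3$ be an integer and let $q'$ be a prime power. The parameter triples $$\Big(q,\tfrac{q-1}{2},\tfrac{q-3}{4}\Big)\quad\text{and}\quad\Big(\tfrac{q'^n-1}{q'-1},\tfrac{q'^{n-1}-1}{q'-1},\tfrac{q'^{n-2}-1}{q'-1}\Big)$$ (of the bi-Paley graph $BP(q)$ and of the incidence graph $I_n(q')$, respectively) coincide only when $q'=2$ and $q=2^n-1$ is a prime.
   Context: These triples are the design parameters (half-size, degree, number of common neighbours of two distinct same-colour vertices) of the bi-Paley graph $BP(q)$ and of the incidence graph $I_n(q')$ of $1$-dimensional versus $(n-1)$-dimensional subspaces of an $n$-dimensional vector space over the field with $q'$ elements. *)

theory Defs
  imports "HOL-Number_Theory.Number_Theory"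
begin

end

theory Submission
  imports Defs
begin

text \<open>
  With denominators cleared, the first two parameter equations read
  \<open>q (q' - 1) = q'\<^sup>n - 1\<close> and \<open>(q - 1)(q' - 1) = 2 (q'\<^bsup>n-1\<^esup> - 1)\<close>;
  eliminating \<open>q'\<^sup>n = q' \<cdot> q'\<^bsup>n-1\<^esup>\<close> leaves \<open>(q' - 2)(q - 1)(q' - 1) = 0\<close>, so
  \<open>q' = 2\<close> and \<open>q = 2\<^sup>n - 1\<close>. A prime power \<open>p\<^sup>k\<close> with \<open>p\<^sup>k + 1\<close> a power of two is
  prime: for even \<open>k\<close> the number \<open>p\<^sup>k + 1\<close> is \<open>2\<close> modulo \<open>4\<close>, and for odd \<open>k\<close> it
  factors as \<open>(p + 1)(1 - p + p\<^sup>2 - \<dots> + p\<^bsup>k-1\<^esup>)\<close> with an odd second factor, which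
  must therefore be \<open>1\<close>.
\<close>

lemma power_plus_one_eq_mult_alternating_sum:
  fixes p :: "'a::comm_ring_1"
  assumes "odd k"
  shows "p ^ k + 1 = (1 + p) * (\<Sum>i<k. (- p) ^ i)"
  using one_diff_power_eq[of "- p" k] assms by (simp add: power_minus_odd add.commute)

lemma odd_alternating_sum_iff:
  fixes p :: int
  assumes "odd p"
  shows "odd (\<Sum>i<k. (- p) ^ i) \<longleftrightarrow> odd k"
  by (induction k) (auto simp: assms)

lemma odd_square_plus_one_mod_four:
  fixes x :: nat
  assumes "odd x"
  shows "(x ^ 2 + 1) mod 4 = 2"
proof -
  obtain t where "x = 2 * t + 1" using assms by (rule oddE)
  then have "x ^ 2 + 1 = 4 * (t * t + t) + 2" by (simp add: power2_eq_square algebra_simps)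
  then show ?thesis by presburger
qed

lemma odd_power_plus_one_eq_power_two_imp:
  fixes p k m :: nat
  assumes "odd p" "odd k" "p ^ k + 1 = 2 ^ m"
  shows "p ^ k = p"
proof -
  define c :: int where "c = (\<Sum>i<k. (- int p) ^ i)"
  have prod: "(1 + int p) * c = 2 ^ m"
    using power_plus_one_eq_mult_alternating_sum[of k "int p"] arg_cong[OF assms(3), of int]
    unfolding c_def by (simp add: assms(2))
  have "odd c" unfolding c_def using odd_alternating_sum_iff[of "int p" k] assms by simp
  then have "coprime c (2 ^ m)" by (simp add: coprime_commute)
  moreover have "c dvd 2 ^ m" using prod by (metis dvd_triv_right)
  ultimately have "is_unit c" by (rule coprime_common_divisor[OF _ dvd_refl])
  moreover have "c > 0"
    using zero_less_mult_pos[of "1 + int p" c] prod by simp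
  ultimately have "c = 1" by auto
  then have "int p ^ k + 1 = 1 + int p"
    using power_plus_one_eq_mult_alternating_sum[of k "int p"] assms(2) unfolding c_def by simp
  then show ?thesis by (metis add.commute add_right_cancel of_nat_eq_iff of_nat_power)
qed

lemma primepow_plus_one_eq_power_two_imp_prime:
  fixes q m :: nat
  assumes "primepow q" "q + 1 = 2 ^ m"
  shows "prime q"
proof -
  obtain p k where p: "prime p" and "k > 0" and q: "q = p ^ k"
    using assms(1) unfolding primepow_def by blast
  have "q > 1" using primepow_gt_Suc_0[OF assms(1)] by simp
  have "m \<ge> 2"
  proof (rule ccontr)
    assume "\<not> m \<ge> 2"
    then have "(2::nat) ^ m \<le> 2 ^ 1" by (intro power_increasing) auto
    with \<open>q > 1\<close> assms(2) show False by simp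
  qed
  then have four_dvd: "4 dvd q + 1"
    using assms(2) le_imp_power_dvd[of 2 m 2] by simp
  have "odd q" using four_dvd by presburger
  then have "odd p" using q \<open>k > 0\<close> by simp
  have "odd k"
  proof
    assume "even k"
    then obtain j where "k = 2 * j" by blast
    then have "q = (p ^ j) ^ 2" using q by (simp add: power_mult mult.commute)
    then have "(q + 1) mod 4 = 2" using \<open>odd p\<close> odd_square_plus_one_mod_four by simp
    with four_dvd show False by simp
  qed
  have "p ^ k = p ^ 1"
    using odd_power_plus_one_eq_power_two_imp[OF \<open>odd p\<close> \<open>odd k\<close>] assms(2) q by simp
  then have "k = 1" using prime_gt_1_nat[OF p] by (simp only: power_inject_exp)
  with p q show ?thesis by simp
qed

lemma geometric_parameters_imp_base_two:
  fixes r Q :: "'a::field_char_0"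
  assumes "r \<noteq> 1" "Q \<noteq> 1" "n \<ge> 1"
    and "Q = (r ^ n - 1) / (r - 1)"
    and "(Q - 1) / 2 = (r ^ (n - 1) - 1) / (r - 1)"
  shows "r = 2 \<and> Q = 2 ^ n - 1"
proof -
  have "r - 1 \<noteq> 0" using assms(1) by simp
  have "r ^ n = r * r ^ (n - 1)" using assms(3) by (cases n) auto
  then have e1: "Q * (r - 1) = r * r ^ (n - 1) - 1"
    using assms(4) \<open>r - 1 \<noteq> 0\<close> by simp
  have e2: "(Q - 1) * (r - 1) = 2 * (r ^ (n - 1) - 1)"
    using assms(5) \<open>r - 1 \<noteq> 0\<close> by (simp add: field_simps)
  have "(r - 2) * (Q - 1) * (r - 1) = r * ((Q - 1) * (r - 1)) - 2 * (Q * (r - 1)) + 2 * (r - 1)"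
    by (simp add: algebra_simps)
  also have "\<dots> = 0" unfolding e1 e2 by (simp add: algebra_simps)
  finally have "r = 2" using assms(1,2) by simp
  with assms(4) show ?thesis by simp
qed

theorem mainTheorem9:
  fixes q q' n :: nat
  assumes "primepow q" and "q mod 4 = 3" and "q \<ge> 7"
    and "n \<ge> 3" and "primepow q'"
    and "((of_nat q :: rat), (of_nat q - 1) / (2::rat), (of_nat q - 3) / (4::rat))
         = ((of_nat q' ^ n - 1) / (of_nat q' - 1),
            (of_nat q' ^ (n - 1) - 1) / (of_nat q' - 1 :: rat),
            (of_nat q' ^ (n - 2) - 1) / (of_nat q' - 1 :: rat))"
  shows "q' = 2 \<and> q = 2 ^ n - 1 \<and> prime q"
proof -
  have "of_nat q' \<noteq> (1::rat)" using primepow_gt_Suc_0[OF assms(5)] by simp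
  moreover have "of_nat q \<noteq> (1::rat)" using assms(3) by simp
  moreover have "n \<ge> 1" using assms(4) by simp
  moreover note assms(6)[unfolded prod.inject]
  ultimately have "of_nat q' = (2::rat) \<and> of_nat q = (2::rat) ^ n - 1"
    using geometric_parameters_imp_base_two[of "of_nat q'" "of_nat q" n] by blast
  then have "q' = 2" and "of_nat (q + 1) = (of_nat (2 ^ n) :: rat)" by simp_all
  then have "q' = 2" and "q + 1 = 2 ^ n" by (simp_all only: of_nat_eq_iff)
  with assms(1) show ?thesis
    using primepow_plus_one_eq_power_two_imp_prime by fastforce
qed

end
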